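(* Let $S\subseteq\mathcal{RV}$ be finite, $\mu\in\mathcal{D}(\mathrm{Mem}[S])$, and let $Y=\{y_0,\dots,y_{K-1}\}$ be distinct randomized variables. Then $Y$ satisfies NA in $\mu$ (in particular $Y\subseteq S$) if and only if for every deterministic memory $\sigma$ (with domain contained in $\mathcal{DV}$) we have $(\sigma,\mu)\models\circledast_{i=0}^{K}[y_i]$.
   Context: Variables are split into disjoint sets $\mathcal{DV}$ (deterministic) and $\mathcal{RV}$ (randomized); values are real numbers. For finite $S$, $\mathrm{Mem}[S]$ is the set of maps $S\to\mathbb{R}$ ordered pointwise; $p_A$ is restriction; $\mathcal{D}(\cdot)$ denotes countably supported probability distributions; $\mathrm{dom}(\mu)=S$ for $\mu\in\mathcal{D}(\mathrm{Mem}[S])$; $\pi_A\mu$ is the marginal on $A$; $\mu\sqsubseteq\mu'$ iff $\mathrm{dom}(\mu)\subseteq\mathrm{dom}(\mu')$ and $\pi_{\mathrm{dom}(\mu)}\mu'=\mu$. A partition is a set of pairwise disjoint nonempty sets; $\mathcal{T}$ coarsens $\mathcal{S}$ if $\bigcup\mathcal{T}=\bigcup\mathcal{S}$ and each element of $\mathcal{T}$ is a union of a subfamily of $\mathcal{S}$. $\mu$ is $\mathcal{S}$-PNA (partition $\mathcal{S}$ with $\bigcup\mathcal{S}\subseteq\mathrm{dom}\mu$) if for every $\mathcal{T}$ coarsening $\mathcal{S}$ and every family $(f_A:\mathrm{Mem}[A]\to[0,\infty))_{A\in\mathcal{T}}$ all non-decreasing or all non-increasing, $\mathbb{E}_{m\sim\mu}[\prod_Af_A(p_Am)]\le\prod_A\mathbb{E}_{m\sim\mu}[f_A(p_Am)]$.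 $\mu_1\oplus\mu_2$ (domains $S,T$) is empty if $S\cap T\ne\emptyset$, and otherwise the set of $\mu\in\mathcal{D}(\mathrm{Mem}[S\cup T])$ with $\pi_S\mu=\mu_1$, $\pi_T\mu=\mu_2$ that are $(\mathcal{S}\cup\mathcal{T})$-PNA whenever $\mathcal{S}$ partitions a subset of $S$, $\mathcal{T}$ partitions a subset of $T$, $\mu_1$ is $\mathcal{S}$-PNA and $\mu_2$ is $\mathcal{T}$-PNA. $Y$ satisfies NA in $\mu$ if $Y\subseteq\mathrm{dom}(\mu)$ and for all disjoint $A,B\subseteq Y$ and all $f:\mathrm{Mem}[A]\to\mathbb{R}$, $g:\mathrm{Mem}[B]\to\mathbb{R}$ both non-decreasing or both non-increasing, each bounded below or bounded above, $\mathbb{E}_{m\sim\mu}[f(p_Am)g(p_Bm)]\le\mathbb{E}[f(p_Am)]\mathbb{E}[g(p_Bm)]$. States are pairs $(\sigma,\mu)$ of a deterministic memory $\sigma$ and a distribution $\mu$. Satisfaction: $(\sigma,\mu)\models[y]$ iff $y\in\mathrm{dom}(\sigma)\cup\mathrm{dom}(\mu)$; $(\sigma,\mu)\models P\circledast Q$ iff there exist $\mu',\mu_1,\mu_2$ with $\mu'\sqsubseteq\mu$, $\mu'\in\mu_1\oplus\mu_2$, $(\sigma,\mu_1)\models P$ and $(\sigma,\mu_2)\models Q$. The iterated conjunction is $\circledast_{i=0}^{1}P_i=P_0$ and $\circledast_{i=0}^{N}P_i=(\circledast_{i=0}^{N-1}P_i)\circledast P_{N-1}$ for $N>1$. *)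

theory Defs
  imports "HOL-Probability.Probability"
begin

text \<open>Memories are partial maps from variables to reals: a memory in Mem[S] is a map m
  with dom m = S.  A distribution is a pmf over memories (pmfs are countably supported).\<close>

type_synonym 'v mem = "'v \<Rightarrow> real option"
type_synonym 'v dist = "'v mem pmf"

definition pdom :: "'v dist \<Rightarrow> 'v set" where
  "pdom \<mu> = dom (SOME m. m \<in> set_pmf \<mu>)"

definition is_dist :: "'v set \<Rightarrow> 'v dist \<Rightarrow> bool" where
  "is_dist S \<mu> \<longleftrightarrow> finite S \<and> (\<forall>m\<in>set_pmf \<mu>. dom m = S)"

definition wf_dist :: "'v dist \<Rightarrow> bool" where
  "wf_dist \<mu> \<longleftrightarrow> is_dist (pdom \<mu>) \<mu>"

definition marg :: "'v set \<Rightarrow> 'v dist \<Rightarrow> 'v dist" where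
  "marg A \<mu> = map_pmf (\<lambda>m. m |` A) \<mu>"

definition sub_dist :: "'v dist \<Rightarrow> 'v dist \<Rightarrow> bool" where
  "sub_dist \<mu> \<mu>' \<longleftrightarrow> pdom \<mu> \<subseteq> pdom \<mu>' \<and> marg (pdom \<mu>) \<mu>' = \<mu>"

definition mono_mem :: "'v set \<Rightarrow> ('v mem \<Rightarrow> real) \<Rightarrow> bool" where
  "mono_mem A f \<longleftrightarrow> (\<forall>m m'. dom m = A \<longrightarrow> dom m' = A \<longrightarrow>
      (\<forall>a\<in>A. the (m a) \<le> the (m' a)) \<longrightarrow> f m \<le> f m')"

definition antimono_mem :: "'v set \<Rightarrow> ('v mem \<Rightarrow> real) \<Rightarrow> bool" where
  "antimono_mem A f \<longleftrightarrow> (\<forall>m m'. dom m = A \<longrightarrow> dom m' = A \<longrightarrow>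
      (\<forall>a\<in>A. the (m a) \<le> the (m' a)) \<longrightarrow> f m' \<le> f m)"

definition is_partition :: "'v set set \<Rightarrow> bool" where
  "is_partition \<S> \<longleftrightarrow> (\<forall>A\<in>\<S>. A \<noteq> {}) \<and> (\<forall>A\<in>\<S>. \<forall>B\<in>\<S>. A \<noteq> B \<longrightarrow> A \<inter> B = {})"

definition coarsens :: "'v set set \<Rightarrow> 'v set set \<Rightarrow> bool" where
  "coarsens \<T> \<S> \<longleftrightarrow> is_partition \<T> \<and> \<Union>\<T> = \<Union>\<S> \<and>
      (\<forall>A\<in>\<T>. \<exists>\<F>\<subseteq>\<S>. A = \<Union>\<F>)"

definition PNA :: "'v set set \<Rightarrow> 'v dist \<Rightarrow> bool" where
  "PNA \<S> \<mu> \<longleftrightarrow> is_partition \<S> \<and> \<Union>\<S> \<subseteq> pdom \<mu> \<and>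
     (\<forall>\<T> (f :: 'v set \<Rightarrow> 'v mem \<Rightarrow> real). coarsens \<T> \<S> \<longrightarrow>
        (\<forall>A\<in>\<T>. \<forall>m. dom m = A \<longrightarrow> 0 \<le> f A m) \<longrightarrow>
        ((\<forall>A\<in>\<T>. mono_mem A (f A)) \<or> (\<forall>A\<in>\<T>. antimono_mem A (f A))) \<longrightarrow>
        (\<integral>\<^sup>+ m. ennreal (\<Prod>A\<in>\<T>. f A (m |` A)) \<partial>measure_pmf \<mu>)
          \<le> (\<Prod>A\<in>\<T>. \<integral>\<^sup>+ m. ennreal (f A (m |` A)) \<partial>measure_pmf \<mu>))"

definition in_oplus :: "'v dist \<Rightarrow> 'v dist \<Rightarrow> 'v dist \<Rightarrow> bool" where
  "in_oplus \<mu> \<mu>1 \<mu>2 \<longleftrightarrow> pdom \<mu>1 \<inter> pdom \<mu>2 = {} \<and>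
     is_dist (pdom \<mu>1 \<union> pdom \<mu>2) \<mu> \<and>
     marg (pdom \<mu>1) \<mu> = \<mu>1 \<and> marg (pdom \<mu>2) \<mu> = \<mu>2 \<and>
     (\<forall>\<S> \<T>. is_partition \<S> \<longrightarrow> \<Union>\<S> \<subseteq> pdom \<mu>1 \<longrightarrow>
             is_partition \<T> \<longrightarrow> \<Union>\<T> \<subseteq> pdom \<mu>2 \<longrightarrow>
             PNA \<S> \<mu>1 \<longrightarrow> PNA \<T> \<mu>2 \<longrightarrow> PNA (\<S> \<union> \<T>) \<mu>)"

definition bdd_mem :: "'v set \<Rightarrow> ('v mem \<Rightarrow> real) \<Rightarrow> bool" where
  "bdd_mem A f \<longleftrightarrow> (\<exists>c. \<forall>m. dom m = A \<longrightarrow> c \<le> f m) \<or> (\<exists>c. \<forall>m. dom m = A \<longrightarrow> f m \<le> c)"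

text \<open>Negative association (expectations taken when they exist as finite reals)\<close>
definition NA :: "'v set \<Rightarrow> 'v dist \<Rightarrow> bool" where
  "NA Y \<mu> \<longleftrightarrow> Y \<subseteq> pdom \<mu> \<and>
     (\<forall>A B (f :: 'v mem \<Rightarrow> real) (g :: 'v mem \<Rightarrow> real).
        A \<subseteq> Y \<longrightarrow> B \<subseteq> Y \<longrightarrow> A \<inter> B = {} \<longrightarrow>
        ((mono_mem A f \<and> mono_mem B g) \<or> (antimono_mem A f \<and> antimono_mem B g)) \<longrightarrow>
        bdd_mem A f \<longrightarrow> bdd_mem B g \<longrightarrow>
        integrable (measure_pmf \<mu>) (\<lambda>m. f (m |` A)) \<longrightarrow>
        integrable (measure_pmf \<mu>) (\<lambda>m. g (m |` B)) \<longrightarrow>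
        integrable (measure_pmf \<mu>) (\<lambda>m. f (m |` A) * g (m |` B)) \<longrightarrow>
        measure_pmf.expectation \<mu> (\<lambda>m. f (m |` A) * g (m |` B))
          \<le> measure_pmf.expectation \<mu> (\<lambda>m. f (m |` A)) * measure_pmf.expectation \<mu> (\<lambda>m. g (m |` B)))"

type_synonym 'v assn = "'v mem \<Rightarrow> 'v dist \<Rightarrow> bool"

definition atom :: "'v \<Rightarrow> 'v assn" where
  "atom y \<sigma> \<mu> \<longleftrightarrow> y \<in> dom \<sigma> \<union> pdom \<mu>"

definition star :: "'v assn \<Rightarrow> 'v assn \<Rightarrow> 'v assn" where
  "star P Q \<sigma> \<mu> \<longleftrightarrow> (\<exists>\<mu>' \<mu>1 \<mu>2. wf_dist \<mu>' \<and> wf_dist \<mu>1 \<and> wf_dist \<mu>2 \<and>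
      sub_dist \<mu>' \<mu> \<and> in_oplus \<mu>' \<mu>1 \<mu>2 \<and> P \<sigma> \<mu>1 \<and> Q \<sigma> \<mu>2)"

fun bigstar :: "(nat \<Rightarrow> 'v assn) \<Rightarrow> nat \<Rightarrow> 'v assn" where
  "bigstar P 0 = undefined"
| "bigstar P (Suc 0) = P 0"
| "bigstar P (Suc (Suc n)) = star (bigstar P (Suc n)) (P (Suc n))"

end

theory Submission
  imports Defs
begin

text \<open>
  If the iterated separating conjunction holds, unfolding it (with the empty deterministic memory)
  and using the clause of \<open>\<oplus>\<close> that preserves partition negative association shows, by induction,
  that \<mu> is PNA for the partition of Y into singletons. The two-block coarsening {A, Y - A} then gives
  the covariance inequality for bounded nonnegative monotone test functions, and clipping with
  dominated convergence extends it to all integrable ones, i.e. Y is NA.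

  Conversely, if Y = Z \<union> {y} is NA, the restriction of \<mu> to Y is a \<oplus>-combination of its marginals
  on Z and on {y}, and induction handles Z. The only nontrivial point is that PNA of the marginal
  on Z for a partition S extends to S \<union> {{y}}: in a coarsening, the block containing y is separated
  from the union of the other blocks by NA (extended to unbounded nonnegative functions by monotone
  convergence), and the other blocks live on Z.
\<close>

section \<open>Marginals\<close>

lemma pdom_eq: "is_dist S \<mu> \<Longrightarrow> pdom \<mu> = S"
  unfolding pdom_def is_dist_def
  by (metis set_pmf_not_empty ex_in_conv someI_ex)

lemma wf_dist_if_is_dist: "is_dist S \<mu> \<Longrightarrow> wf_dist \<mu>"
  unfolding wf_dist_def by (metis pdom_eq)

lemma dom_of_set_pmf: "wf_dist \<mu> \<Longrightarrow> m \<in> set_pmf \<mu> \<Longrightarrow> dom m = pdom \<mu>"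
  unfolding wf_dist_def is_dist_def by simp

lemma is_dist_marg: "is_dist S \<mu> \<Longrightarrow> is_dist (S \<inter> A) (marg A \<mu>)"
  unfolding is_dist_def marg_def by auto

lemma pdom_marg: "is_dist S \<mu> \<Longrightarrow> P \<subseteq> S \<Longrightarrow> pdom (marg P \<mu>) = P"
  using pdom_eq[OF is_dist_marg[of S \<mu> P]] by (simp add: inf.absorb2)

lemma sub_dist_marg: "is_dist S \<mu> \<Longrightarrow> P \<subseteq> S \<Longrightarrow> sub_dist (marg P \<mu>) \<mu>"
  unfolding sub_dist_def by (simp add: pdom_marg pdom_eq)

lemma nn_integral_marg:
  "(\<And>m. h (m |` P) = h m) \<Longrightarrow>
   (\<integral>\<^sup>+ m. h m \<partial>measure_pmf (marg P \<mu>)) = (\<integral>\<^sup>+ m. h m \<partial>measure_pmf \<mu>)"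
  by (simp add: marg_def)

lemma integral_marg:
  fixes h :: "'v mem \<Rightarrow> real"
  assumes "\<And>m. h (m |` P) = h m"
  shows "integrable (measure_pmf (marg P \<mu>)) h \<longleftrightarrow> integrable (measure_pmf \<mu>) h"
    and "measure_pmf.expectation (marg P \<mu>) h = measure_pmf.expectation \<mu> h"
  using assms by (simp_all add: marg_def)


section \<open>Monotone functions on memories\<close>

lemma mono_mem_comp: "mono_mem A f \<Longrightarrow> mono h \<Longrightarrow> mono_mem A (\<lambda>m. h (f m))"
  unfolding mono_mem_def by (auto elim!: monoD)

lemma antimono_mem_comp: "antimono_mem A f \<Longrightarrow> mono h \<Longrightarrow> antimono_mem A (\<lambda>m. h (f m))"
  unfolding antimono_mem_def by (auto elim!: monoD)

lemma mono_mem_const: "mono_mem A (\<lambda>_. c)" and antimono_mem_const: "antimono_mem A (\<lambda>_. c)"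
  unfolding mono_mem_def antimono_mem_def by auto

lemma restrict_le_restrict:
  assumes "B \<subseteq> C" "dom m = C" "dom m' = C" "\<forall>a\<in>C. the (m a) \<le> the (m' a)"
  shows "dom (m |` B) = B" "dom (m' |` B) = B" "\<forall>a\<in>B. the ((m |` B) a) \<le> the ((m' |` B) a)"
  using assms by auto

lemma mono_mem_restrict:
  assumes "B \<subseteq> C" and mono: "mono_mem B g"
  shows "mono_mem C (\<lambda>m. g (m |` B))"
  unfolding mono_mem_def
proof (intro allI impI)
  fix m m' :: "'a mem"
  assume "dom m = C" "dom m' = C" "\<forall>a\<in>C. the (m a) \<le> the (m' a)"
  from restrict_le_restrict[OF assms(1) this] show "g (m |` B) \<le> g (m' |` B)"
    using mono unfolding mono_mem_def by blast
qed

lemma antimono_mem_restrict: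
  assumes "B \<subseteq> C" and antimono: "antimono_mem B g"
  shows "antimono_mem C (\<lambda>m. g (m |` B))"
  unfolding antimono_mem_def
proof (intro allI impI)
  fix m m' :: "'a mem"
  assume "dom m = C" "dom m' = C" "\<forall>a\<in>C. the (m a) \<le> the (m' a)"
  from restrict_le_restrict[OF assms(1) this] show "g (m' |` B) \<le> g (m |` B)"
    using antimono unfolding antimono_mem_def by blast
qed

lemma mono_mem_prod:
  assumes "\<And>X. X \<in> T \<Longrightarrow> X \<subseteq> C" "\<And>X. X \<in> T \<Longrightarrow> mono_mem X (F X)" "\<And>X m. 0 \<le> F X m"
  shows "mono_mem C (\<lambda>m. \<Prod>X\<in>T. F X (m |` X))"
  unfolding mono_mem_def
proof (intro allI impI prod_mono conjI)
  fix m m' :: "'a mem" and X assume "dom m = C" "dom m' = C" "\<forall>a\<in>C. the (m a) \<le> the (m' a)" "X \<in> T"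
  then show "F X (m |` X) \<le> F X (m' |` X)"
    using mono_mem_restrict[OF assms(1,2)] unfolding mono_mem_def by blast
qed (use assms(3) in auto)

lemma antimono_mem_prod:
  assumes "\<And>X. X \<in> T \<Longrightarrow> X \<subseteq> C" "\<And>X. X \<in> T \<Longrightarrow> antimono_mem X (F X)" "\<And>X m. 0 \<le> F X m"
  shows "antimono_mem C (\<lambda>m. \<Prod>X\<in>T. F X (m |` X))"
  unfolding antimono_mem_def
proof (intro allI impI prod_mono conjI)
  fix m m' :: "'a mem" and X assume "dom m = C" "dom m' = C" "\<forall>a\<in>C. the (m a) \<le> the (m' a)" "X \<in> T"
  then show "F X (m' |` X) \<le> F X (m |` X)"
    using antimono_mem_restrict[OF assms(1,2)] unfolding antimono_mem_def by blast
qed (use assms(3) in auto)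


section \<open>Partitions\<close>

lemma partition_subset_singleton:
  assumes "is_partition T" "\<Union>T \<subseteq> {y}"
  shows "T = {} \<or> T = {{y}}"
proof -
  have "X = {y}" if "X \<in> T" for X
    using assms that unfolding is_partition_def by blast
  then show ?thesis by blast
qed

lemma is_partition_insert_singleton:
  "is_partition S \<Longrightarrow> y \<notin> \<Union>S \<Longrightarrow> is_partition (S \<union> {{y}})"
  unfolding is_partition_def by auto

lemma coarsens_singletons:
  assumes "is_partition T" "\<Union>T = Y"
  shows "coarsens T ((\<lambda>x. {x}) ` Y)"
proof -
  have "\<exists>F\<subseteq>(\<lambda>x. {x}) ` Y. A = \<Union>F" if "A \<in> T" for A
    using that assms(2) by (intro exI[of _ "(\<lambda>x. {x}) ` A"]) auto
  then show ?thesis using assms unfolding coarsens_def by auto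
qed

lemma finite_coarsens:
  assumes "coarsens T S" "finite (\<Union>S)"
  shows "finite T"
proof -
  have "T \<subseteq> Pow (\<Union>S)" using assms(1) unfolding coarsens_def by auto
  then show ?thesis using assms(2) by (meson finite_Pow_iff finite_subset)
qed

lemma coarsens_remove_point:
  assumes co: "coarsens T (S \<union> {{y}})" and y: "y \<notin> \<Union>S" and B: "B \<in> T" "y \<in> B"
  shows "coarsens (insert (B - {y}) (T - {B}) - {{}}) S"
proof -
  have part: "is_partition T" and UT: "\<Union>T = \<Union>S \<union> {y}"
    and fam: "\<And>X. X \<in> T \<Longrightarrow> \<exists>F\<subseteq>S \<union> {{y}}. X = \<Union>F"
    using co unfolding coarsens_def by auto
  have disj: "X \<inter> X' = {}" if "X \<in> T" "X' \<in> T" "X \<noteq> X'" for X X'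
    using part that unfolding is_partition_def by blast
  have yX: "y \<notin> X" if "X \<in> T - {B}" for X
    using disj[OF B(1)] that B(2) by blast
  have block: "\<exists>F\<subseteq>S. X - {y} = \<Union>F" if X: "X \<in> T" for X
  proof -
    obtain F where "F \<subseteq> S \<union> {{y}}" "X = \<Union>F" using fam[OF X] by blast
    then show ?thesis using y by (intro exI[of _ "F - {{y}}"]) auto
  qed
  let ?T' = "insert (B - {y}) (T - {B}) - {{}}"
  have T': "X \<in> ?T' \<longleftrightarrow> X \<noteq> {} \<and> (X = B - {y} \<or> X \<in> T - {B})" for X
    by blast
  show ?thesis
    unfolding coarsens_def is_partition_def
  proof (intro conjI ballI impI)
    have "\<Union>?T' = (B - {y}) \<union> \<Union>(T - {B})" by auto
    also have "\<dots> = \<Union>T - {y}" using yX B(1) by auto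
    finally show "\<Union>?T' = \<Union>S" using UT y by auto
    fix X assume X: "X \<in> ?T'"
    then show "X \<noteq> {}" by (simp add: T')
    from X consider "X = B - {y}" | "X \<in> T - {B}" unfolding T' by blast
    then show "\<exists>F\<subseteq>S. X = \<Union>F"
    proof cases
      case 2
      then have "X \<in> T" "X - {y} = X" using yX by auto
      then show ?thesis using block by metis
    qed (use block[OF B(1)] in simp)
    fix X' assume X': "X' \<in> ?T'" and "X \<noteq> X'"
    with X consider "X \<in> T - {B}" "X' \<in> T - {B}" | "X = B - {y}" "X' \<in> T - {B}"
      | "X \<in> T - {B}" "X' = B - {y}"
      unfolding T' by blast
    then show "X \<inter> X' = {}"
      by cases (use \<open>X \<noteq> X'\<close> disj[OF B(1)] disj in blast)+
  qed
qed


section \<open>Partition negative association\<close>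

lemma PNA_partition: "PNA S \<mu> \<Longrightarrow> is_partition S" "PNA S \<mu> \<Longrightarrow> \<Union>S \<subseteq> pdom \<mu>"
  by (simp_all add: PNA_def)

lemma PNA_D:
  assumes "PNA S \<mu>" "coarsens T S" "\<forall>A\<in>T. \<forall>m. dom m = A \<longrightarrow> 0 \<le> f A m"
     "(\<forall>A\<in>T. mono_mem A (f A)) \<or> (\<forall>A\<in>T. antimono_mem A (f A))"
  shows "(\<integral>\<^sup>+ m. ennreal (\<Prod>A\<in>T. f A (m |` A)) \<partial>measure_pmf \<mu>)
          \<le> (\<Prod>A\<in>T. \<integral>\<^sup>+ m. ennreal (f A (m |` A)) \<partial>measure_pmf \<mu>)"
  by (rule conjunct2[OF conjunct2[OF assms(1)[unfolded PNA_def]], rule_format]) (use assms(2-) in auto)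

text \<open>Nonnegativity of the test functions only matters on Mem[A]; off it they can be cut at 0.\<close>
lemma PNA_if_nonneg:
  assumes wf: "wf_dist \<mu>" and "is_partition S" and S: "\<Union>S \<subseteq> pdom \<mu>"
    and le: "\<And>T f. coarsens T S \<Longrightarrow> (\<And>A m. 0 \<le> f A m) \<Longrightarrow>
       (\<forall>A\<in>T. mono_mem A (f A)) \<or> (\<forall>A\<in>T. antimono_mem A (f A)) \<Longrightarrow>
       (\<integral>\<^sup>+ m. ennreal (\<Prod>A\<in>T. f A (m |` A)) \<partial>measure_pmf \<mu>)
         \<le> (\<Prod>A\<in>T. \<integral>\<^sup>+ m. ennreal (f A (m |` A)) \<partial>measure_pmf \<mu>)"
  shows "PNA S \<mu>"
  unfolding PNA_def
proof (intro conjI allI impI)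
  fix T and f :: "'a set \<Rightarrow> 'a mem \<Rightarrow> real"
  assume co: "coarsens T S" and nn: "\<forall>A\<in>T. \<forall>m. dom m = A \<longrightarrow> 0 \<le> f A m"
    and mo: "(\<forall>A\<in>T. mono_mem A (f A)) \<or> (\<forall>A\<in>T. antimono_mem A (f A))"
  define f' where "f' A m = max 0 (f A m)" for A m
  have "mono (max (0::real))" by (simp add: monoI)
  then have mo': "(\<forall>A\<in>T. mono_mem A (f' A)) \<or> (\<forall>A\<in>T. antimono_mem A (f' A))"
    using mo unfolding f'_def by (blast intro: mono_mem_comp antimono_mem_comp)
  have f'_eq: "f' A (m |` A) = f A (m |` A)" if "A \<in> T" "m \<in> set_pmf \<mu>" for A m
  proof -
    have "A \<subseteq> pdom \<mu>" using co S that(1) unfolding coarsens_def by blast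
    then have "dom (m |` A) = A" using dom_of_set_pmf[OF wf that(2)] by auto
    then show ?thesis using nn that(1) unfolding f'_def by simp
  qed
  have "(\<integral>\<^sup>+ m. ennreal (\<Prod>A\<in>T. f' A (m |` A)) \<partial>measure_pmf \<mu>)
         \<le> (\<Prod>A\<in>T. \<integral>\<^sup>+ m. ennreal (f' A (m |` A)) \<partial>measure_pmf \<mu>)"
    by (rule le[OF co _ mo']) (simp add: f'_def)
  moreover have "(\<integral>\<^sup>+ m. ennreal (\<Prod>A\<in>T. f' A (m |` A)) \<partial>measure_pmf \<mu>)
      = (\<integral>\<^sup>+ m. ennreal (\<Prod>A\<in>T. f A (m |` A)) \<partial>measure_pmf \<mu>)"
    by (intro nn_integral_cong_AE AE_pmfI) (simp add: f'_eq cong: prod.cong)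
  moreover have "(\<integral>\<^sup>+ m. ennreal (f' A (m |` A)) \<partial>measure_pmf \<mu>)
      = (\<integral>\<^sup>+ m. ennreal (f A (m |` A)) \<partial>measure_pmf \<mu>)" if "A \<in> T" for A
    by (intro nn_integral_cong_AE AE_pmfI) (simp add: f'_eq that)
  ultimately show "(\<integral>\<^sup>+ m. ennreal (\<Prod>A\<in>T. f A (m |` A)) \<partial>measure_pmf \<mu>)
         \<le> (\<Prod>A\<in>T. \<integral>\<^sup>+ m. ennreal (f A (m |` A)) \<partial>measure_pmf \<mu>)"
    by (simp cong: prod.cong)
qed (use assms in auto)

lemma PNA_subfamily:
  assumes "PNA S \<mu>" "coarsens T S" "finite T" "T0 \<subseteq> T"
    and nn: "\<And>A m. 0 \<le> f A m"
    and mo: "(\<forall>A\<in>T0. mono_mem A (f A)) \<or> (\<forall>A\<in>T0. antimono_mem A (f A))"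
  shows "(\<integral>\<^sup>+ m. ennreal (\<Prod>A\<in>T0. f A (m |` A)) \<partial>measure_pmf \<mu>)
          \<le> (\<Prod>A\<in>T0. \<integral>\<^sup>+ m. ennreal (f A (m |` A)) \<partial>measure_pmf \<mu>)"
proof -
  define f' where "f' A = (if A \<in> T0 then f A else (\<lambda>_. 1))" for A
  have mo': "(\<forall>A\<in>T. mono_mem A (f' A)) \<or> (\<forall>A\<in>T. antimono_mem A (f' A))"
    using mo by (auto simp: f'_def mono_mem_const antimono_mem_const)
  have "(\<integral>\<^sup>+ m. ennreal (\<Prod>A\<in>T. f' A (m |` A)) \<partial>measure_pmf \<mu>)
          \<le> (\<Prod>A\<in>T. \<integral>\<^sup>+ m. ennreal (f' A (m |` A)) \<partial>measure_pmf \<mu>)"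
    by (rule PNA_D[OF assms(1,2) _ mo']) (simp add: f'_def nn)
  moreover have "(\<Prod>A\<in>T. f' A (m |` A)) = (\<Prod>A\<in>T0. f A (m |` A))" for m
    by (rule prod.mono_neutral_cong_right) (use assms(3,4) in \<open>auto simp: f'_def\<close>)
  moreover have "(\<Prod>A\<in>T. \<integral>\<^sup>+ m. ennreal (f' A (m |` A)) \<partial>measure_pmf \<mu>)
      = (\<Prod>A\<in>T0. \<integral>\<^sup>+ m. ennreal (f A (m |` A)) \<partial>measure_pmf \<mu>)"
    by (rule prod.mono_neutral_cong_right) (use assms(3,4) in \<open>auto simp: f'_def\<close>)
  ultimately show ?thesis by simp
qed

lemma PNA_sub_dist:
  assumes P: "PNA S \<mu>'" and sub: "sub_dist \<mu>' \<mu>"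
  shows "PNA S \<mu>"
  unfolding PNA_def
proof (intro conjI allI impI)
  have dom: "pdom \<mu>' \<subseteq> pdom \<mu>" and marg: "marg (pdom \<mu>') \<mu> = \<mu>'"
    using sub unfolding sub_dist_def by auto
  have U: "\<Union>S \<subseteq> pdom \<mu>'" using PNA_partition(2)[OF P] .
  show "is_partition S" using PNA_partition(1)[OF P] .
  show "\<Union>S \<subseteq> pdom \<mu>" using U dom by auto
  fix T and f :: "'a set \<Rightarrow> 'a mem \<Rightarrow> real"
  assume co: "coarsens T S" and nn: "\<forall>A\<in>T. \<forall>m. dom m = A \<longrightarrow> 0 \<le> f A m"
    and mo: "(\<forall>A\<in>T. mono_mem A (f A)) \<or> (\<forall>A\<in>T. antimono_mem A (f A))"
  have inv: "pdom \<mu>' \<inter> A = A" if "A \<in> T" for A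
    using co U that unfolding coarsens_def by blast
  have "(\<integral>\<^sup>+ m. ennreal (\<Prod>A\<in>T. f A (m |` A)) \<partial>measure_pmf (marg (pdom \<mu>') \<mu>))
          \<le> (\<Prod>A\<in>T. \<integral>\<^sup>+ m. ennreal (f A (m |` A)) \<partial>measure_pmf (marg (pdom \<mu>') \<mu>))"
    using PNA_D[OF P co nn mo] by (simp only: marg)
  moreover have "(\<integral>\<^sup>+ m. ennreal (\<Prod>A\<in>T. f A (m |` A)) \<partial>measure_pmf (marg (pdom \<mu>') \<mu>))
      = (\<integral>\<^sup>+ m. ennreal (\<Prod>A\<in>T. f A (m |` A)) \<partial>measure_pmf \<mu>)"
    by (rule nn_integral_marg) (auto intro!: prod.cong simp: inv)
  moreover have "(\<integral>\<^sup>+ m. ennreal (f A (m |` A)) \<partial>measure_pmf (marg (pdom \<mu>') \<mu>))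
      = (\<integral>\<^sup>+ m. ennreal (f A (m |` A)) \<partial>measure_pmf \<mu>)" if "A \<in> T" for A
    by (rule nn_integral_marg) (simp add: inv that)
  ultimately show "(\<integral>\<^sup>+ m. ennreal (\<Prod>A\<in>T. f A (m |` A)) \<partial>measure_pmf \<mu>)
          \<le> (\<Prod>A\<in>T. \<integral>\<^sup>+ m. ennreal (f A (m |` A)) \<partial>measure_pmf \<mu>)"
    by (simp cong: prod.cong)
qed

lemma PNA_singleton: "y \<in> pdom \<mu> \<Longrightarrow> PNA {{y}} \<mu>"
  unfolding PNA_def
proof (intro conjI allI impI)
  fix T and f :: "'a set \<Rightarrow> 'a mem \<Rightarrow> real"
  assume "coarsens T {{y}}"
  then have "T = {{y}}"
    using partition_subset_singleton[of T y] unfolding coarsens_def by auto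
  then show "(\<integral>\<^sup>+ m. ennreal (\<Prod>A\<in>T. f A (m |` A)) \<partial>measure_pmf \<mu>)
          \<le> (\<Prod>A\<in>T. \<integral>\<^sup>+ m. ennreal (f A (m |` A)) \<partial>measure_pmf \<mu>)" by simp
qed (simp_all add: is_partition_def)

section \<open>Covariance inequalities\<close>

lemma integrable_pmf_bounded: "(\<And>m. \<bar>h m\<bar> \<le> c) \<Longrightarrow> integrable (measure_pmf \<mu>) (h :: _ \<Rightarrow> real)"
  by (rule measure_pmf.integrable_const_bound[where B=c]) auto

lemma nn_integral_mult_le_iff_expectation:
  fixes F G :: "'a \<Rightarrow> real"
  assumes F: "\<And>x. 0 \<le> F x \<and> F x \<le> c" and G: "\<And>x. 0 \<le> G x \<and> G x \<le> c"
  shows "(\<integral>\<^sup>+ x. ennreal (F x * G x) \<partial>measure_pmf \<mu>)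
           \<le> (\<integral>\<^sup>+ x. ennreal (F x) \<partial>measure_pmf \<mu>) * (\<integral>\<^sup>+ x. ennreal (G x) \<partial>measure_pmf \<mu>)
    \<longleftrightarrow> measure_pmf.expectation \<mu> (\<lambda>x. F x * G x)
           \<le> measure_pmf.expectation \<mu> F * measure_pmf.expectation \<mu> G"
proof -
  have FG: "0 \<le> F x * G x \<and> F x * G x \<le> c * c" for x
    using F[of x] G[of x] by (auto intro: mult_mono)
  have int: "integrable (measure_pmf \<mu>) F" "integrable (measure_pmf \<mu>) G"
    "integrable (measure_pmf \<mu>) (\<lambda>x. F x * G x)"
    using F G FG by (auto intro: integrable_pmf_bounded[where c=c] integrable_pmf_bounded[where c="c * c"])
  have "(\<integral>\<^sup>+ x. ennreal (F x * G x) \<partial>measure_pmf \<mu>) = ennreal (measure_pmf.expectation \<mu> (\<lambda>x. F x * G x))"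
    "(\<integral>\<^sup>+ x. ennreal (F x) \<partial>measure_pmf \<mu>) = ennreal (measure_pmf.expectation \<mu> F)"
    "(\<integral>\<^sup>+ x. ennreal (G x) \<partial>measure_pmf \<mu>) = ennreal (measure_pmf.expectation \<mu> G)"
    using int F G FG by (auto intro!: nn_integral_eq_integral)
  moreover have "0 \<le> measure_pmf.expectation \<mu> F" "0 \<le> measure_pmf.expectation \<mu> G"
    using F G by (auto intro!: integral_nonneg_AE)
  ultimately show ?thesis
    by (simp add: ennreal_mult[symmetric] ennreal_le_iff)
qed

lemma expectation_mult_le_of_shifted:
  fixes a b :: "'a \<Rightarrow> real"
  assumes ia: "integrable (measure_pmf \<mu>) a" and ib: "integrable (measure_pmf \<mu>) b"
    and iab: "integrable (measure_pmf \<mu>) (\<lambda>x. a x * b x)"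
    and le: "measure_pmf.expectation \<mu> (\<lambda>x. (a x + c) * (b x + c))
      \<le> measure_pmf.expectation \<mu> (\<lambda>x. a x + c) * measure_pmf.expectation \<mu> (\<lambda>x. b x + c)"
  shows "measure_pmf.expectation \<mu> (\<lambda>x. a x * b x)
      \<le> measure_pmf.expectation \<mu> a * measure_pmf.expectation \<mu> b"
proof -
  have eq: "(\<lambda>x. (a x + c) * (b x + c)) = (\<lambda>x. a x * b x + (c * a x + (c * b x + c * c)))"
    by (auto simp: algebra_simps)
  have "measure_pmf.expectation \<mu> (\<lambda>x. (a x + c) * (b x + c))
     = measure_pmf.expectation \<mu> (\<lambda>x. a x * b x)
       + (c * measure_pmf.expectation \<mu> a + (c * measure_pmf.expectation \<mu> b + c * c))"
    unfolding eq using ia ib iab by simp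
  moreover have "measure_pmf.expectation \<mu> (\<lambda>x. a x + c) = measure_pmf.expectation \<mu> a + c"
    using ia by simp
  moreover have "measure_pmf.expectation \<mu> (\<lambda>x. b x + c) = measure_pmf.expectation \<mu> b + c"
    using ib by simp
  ultimately show ?thesis using le by (simp add: algebra_simps)
qed

definition clip :: "nat \<Rightarrow> real \<Rightarrow> real" where
  "clip n x = max (- real n) (min x (real n))"

lemma mono_clip: "mono (clip n)"
  unfolding clip_def by (rule monoI) linarith

lemma abs_clip_le: "\<bar>clip n x\<bar> \<le> \<bar>x\<bar>" and abs_clip_le_bound: "\<bar>clip n x\<bar> \<le> real n"
  unfolding clip_def by linarith+

lemma clip_tendsto: "(\<lambda>n. clip n x) \<longlonglongrightarrow> x"
proof (rule tendsto_eventually, rule eventually_sequentiallyI)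
  fix n assume "nat \<lceil>\<bar>x\<bar>\<rceil> \<le> n"
  then show "clip n x = x" unfolding clip_def by linarith
qed

lemma expectation_mult_le_by_clipping:
  fixes F G :: "'a \<Rightarrow> real"
  assumes iF: "integrable (measure_pmf \<mu>) F" and iG: "integrable (measure_pmf \<mu>) G"
    and iFG: "integrable (measure_pmf \<mu>) (\<lambda>x. F x * G x)"
    and clipped: "\<And>n. measure_pmf.expectation \<mu> (\<lambda>x. clip n (F x) * clip n (G x))
      \<le> measure_pmf.expectation \<mu> (\<lambda>x. clip n (F x)) * measure_pmf.expectation \<mu> (\<lambda>x. clip n (G x))"
  shows "measure_pmf.expectation \<mu> (\<lambda>x. F x * G x)
      \<le> measure_pmf.expectation \<mu> F * measure_pmf.expectation \<mu> G"
proof -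
  have "(\<lambda>n. measure_pmf.expectation \<mu> (\<lambda>x. clip n (F x))) \<longlonglongrightarrow> measure_pmf.expectation \<mu> F"
    by (rule integral_dominated_convergence[where w="\<lambda>x. \<bar>F x\<bar>"])
       (auto simp: abs_clip_le clip_tendsto iF)
  moreover have "(\<lambda>n. measure_pmf.expectation \<mu> (\<lambda>x. clip n (G x))) \<longlonglongrightarrow> measure_pmf.expectation \<mu> G"
    by (rule integral_dominated_convergence[where w="\<lambda>x. \<bar>G x\<bar>"])
       (auto simp: abs_clip_le clip_tendsto iG)
  moreover have "(\<lambda>n. measure_pmf.expectation \<mu> (\<lambda>x. clip n (F x) * clip n (G x)))
      \<longlonglongrightarrow> measure_pmf.expectation \<mu> (\<lambda>x. F x * G x)"
  proof (rule integral_dominated_convergence[where w="\<lambda>x. \<bar>F x * G x\<bar>"])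
    show "integrable (measure_pmf \<mu>) (\<lambda>x. \<bar>F x * G x\<bar>)" using iFG by simp
    show "AE x in measure_pmf \<mu>. (\<lambda>n. clip n (F x) * clip n (G x)) \<longlonglongrightarrow> F x * G x"
      by (intro AE_I2 tendsto_mult clip_tendsto)
    show "AE x in measure_pmf \<mu>. norm (clip n (F x) * clip n (G x)) \<le> \<bar>F x * G x\<bar>" for n
      by (intro AE_I2) (simp add: abs_mult mult_mono abs_clip_le)
  qed auto
  ultimately show ?thesis
    using clipped by (intro LIMSEQ_le[OF _ tendsto_mult]) auto
qed

lemma PNA_singletons_expectation_mult_le:
  fixes f g :: "'v mem \<Rightarrow> real"
  assumes P: "PNA ((\<lambda>x. {x}) ` Y) \<mu>" and AB: "A \<subseteq> Y" "B \<subseteq> Y" "A \<inter> B = {}"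
    and f: "\<And>m. 0 \<le> f m \<and> f m \<le> c" and g: "\<And>m. 0 \<le> g m \<and> g m \<le> c"
    and mo: "(mono_mem A f \<and> mono_mem B g) \<or> (antimono_mem A f \<and> antimono_mem B g)"
  shows "measure_pmf.expectation \<mu> (\<lambda>m. f (m |` A) * g (m |` B))
     \<le> measure_pmf.expectation \<mu> (\<lambda>m. f (m |` A)) * measure_pmf.expectation \<mu> (\<lambda>m. g (m |` B))"
proof (cases "A = {} \<or> B = {}")
  case True
  then show ?thesis by auto
next
  case False
  define F where "F X = (if X = A then f else (\<lambda>m. g (m |` B)))" for X
  have ne: "A \<noteq> Y - A" using False AB by auto
  have BA: "(Y - A) \<inter> B = B" using AB by auto
  have co: "coarsens {A, Y - A} ((\<lambda>x. {x}) ` Y)"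
    using False AB by (intro coarsens_singletons) (auto simp: is_partition_def)
  have nn: "\<forall>X\<in>{A, Y - A}. \<forall>m. dom m = X \<longrightarrow> 0 \<le> F X m"
    using f g by (simp add: F_def)
  have "B \<subseteq> Y - A" using AB by auto
  then have "(\<forall>X\<in>{A, Y - A}. mono_mem X (F X)) \<or> (\<forall>X\<in>{A, Y - A}. antimono_mem X (F X))"
    using mo ne by (auto simp: F_def intro: mono_mem_restrict antimono_mem_restrict)
  from PNA_D[OF P co nn this]
  have "(\<integral>\<^sup>+ m. ennreal (f (m |` A) * g (m |` B)) \<partial>measure_pmf \<mu>)
     \<le> (\<integral>\<^sup>+ m. ennreal (f (m |` A)) \<partial>measure_pmf \<mu>) * (\<integral>\<^sup>+ m. ennreal (g (m |` B)) \<partial>measure_pmf \<mu>)"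
    using ne by (simp add: F_def BA)
  then show ?thesis
    using nn_integral_mult_le_iff_expectation[where F="\<lambda>m. f (m |` A)" and G="\<lambda>m. g (m |` B)" and c=c]
    by (simp add: f g)
qed

lemma NA_if_PNA_singletons:
  assumes P: "PNA ((\<lambda>x. {x}) ` Y) \<mu>"
  shows "NA Y \<mu>"
  unfolding NA_def
proof (intro conjI allI impI)
  show "Y \<subseteq> pdom \<mu>" using PNA_partition(2)[OF P] by auto
  fix A B and f g :: "'a mem \<Rightarrow> real"
  assume AB: "A \<subseteq> Y" "B \<subseteq> Y" "A \<inter> B = {}"
    and mo: "mono_mem A f \<and> mono_mem B g \<or> antimono_mem A f \<and> antimono_mem B g"
    and int: "integrable (measure_pmf \<mu>) (\<lambda>m. f (m |` A))"
      "integrable (measure_pmf \<mu>) (\<lambda>m. g (m |` B))"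
      "integrable (measure_pmf \<mu>) (\<lambda>m. f (m |` A) * g (m |` B))"
  show "measure_pmf.expectation \<mu> (\<lambda>m. f (m |` A) * g (m |` B))
     \<le> measure_pmf.expectation \<mu> (\<lambda>m. f (m |` A)) * measure_pmf.expectation \<mu> (\<lambda>m. g (m |` B))"
  proof (rule expectation_mult_le_by_clipping[OF int])
    fix n
    \<comment> \<open>PNA only applies to nonnegative functions, and shifting by n leaves the covariance unchanged\<close>
    define shift where "shift x = clip n x + real n" for x
    have "mono shift" using mono_clip unfolding shift_def mono_def by simp
    then have mo': "(mono_mem A (\<lambda>m. shift (f m)) \<and> mono_mem B (\<lambda>m. shift (g m))) \<or>
       (antimono_mem A (\<lambda>m. shift (f m)) \<and> antimono_mem B (\<lambda>m. shift (g m)))"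
      using mo by (auto intro: mono_mem_comp antimono_mem_comp)
    have bounded: "0 \<le> shift x \<and> shift x \<le> 2 * real n" for x
      using abs_clip_le_bound[of n x] unfolding shift_def by linarith
    have le: "measure_pmf.expectation \<mu> (\<lambda>m. shift (f (m |` A)) * shift (g (m |` B)))
      \<le> measure_pmf.expectation \<mu> (\<lambda>m. shift (f (m |` A)))
         * measure_pmf.expectation \<mu> (\<lambda>m. shift (g (m |` B)))"
      by (rule PNA_singletons_expectation_mult_le[OF P AB bounded bounded mo'])
    have clip_bounded: "integrable (measure_pmf \<mu>) (\<lambda>m. clip n (h m))" for h :: "'a mem \<Rightarrow> real"
      by (rule integrable_pmf_bounded[where c="real n"]) (rule abs_clip_le_bound)
    have "integrable (measure_pmf \<mu>) (\<lambda>m. clip n (f (m |` A)) * clip n (g (m |` B)))"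
      by (rule integrable_pmf_bounded[where c="real n * real n"])
         (simp add: abs_mult mult_mono abs_clip_le_bound)
    from expectation_mult_le_of_shifted[OF clip_bounded clip_bounded this] le
    show "measure_pmf.expectation \<mu> (\<lambda>m. clip n (f (m |` A)) * clip n (g (m |` B)))
      \<le> measure_pmf.expectation \<mu> (\<lambda>m. clip n (f (m |` A)))
         * measure_pmf.expectation \<mu> (\<lambda>m. clip n (g (m |` B)))"
      unfolding shift_def by blast
  qed
qed


section \<open>Negative association\<close>

lemma NA_D:
  fixes f g :: "'a mem \<Rightarrow> real"
  assumes "NA Y \<mu>" "A \<subseteq> Y" "B \<subseteq> Y" "A \<inter> B = {}"
   "(mono_mem A f \<and> mono_mem B g) \<or> (antimono_mem A f \<and> antimono_mem B g)"
   "bdd_mem A f" "bdd_mem B g"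
   "integrable (measure_pmf \<mu>) (\<lambda>m. f (m |` A))"
   "integrable (measure_pmf \<mu>) (\<lambda>m. g (m |` B))"
   "integrable (measure_pmf \<mu>) (\<lambda>m. f (m |` A) * g (m |` B))"
  shows "measure_pmf.expectation \<mu> (\<lambda>m. f (m |` A) * g (m |` B))
     \<le> measure_pmf.expectation \<mu> (\<lambda>m. f (m |` A)) * measure_pmf.expectation \<mu> (\<lambda>m. g (m |` B))"
  using conjunct2[OF assms(1)[unfolded NA_def], rule_format, OF assms(2-)] .

lemma NA_subset: "NA Y \<mu> \<Longrightarrow> Y' \<subseteq> Y \<Longrightarrow> NA Y' \<mu>"
  unfolding NA_def by (meson order_trans)

lemma NA_marg:
  assumes na: "NA Y \<mu>" and YP: "Y \<subseteq> P" and d: "is_dist S \<mu>"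
  shows "NA Y (marg P \<mu>)"
  unfolding NA_def
proof (intro conjI allI impI)
  have "Y \<subseteq> S" using na pdom_eq[OF d] unfolding NA_def by auto
  then show "Y \<subseteq> pdom (marg P \<mu>)" using YP pdom_eq[OF is_dist_marg[OF d]] by auto
  fix A B and f g :: "'a mem \<Rightarrow> real"
  assume AB: "A \<subseteq> Y" "B \<subseteq> Y" "A \<inter> B = {}"
    and mo: "mono_mem A f \<and> mono_mem B g \<or> antimono_mem A f \<and> antimono_mem B g"
    and bdd: "bdd_mem A f" "bdd_mem B g"
  have PA: "P \<inter> A = A" "P \<inter> B = B" using AB YP by auto
  assume "integrable (measure_pmf (marg P \<mu>)) (\<lambda>m. f (m |` A))"
    "integrable (measure_pmf (marg P \<mu>)) (\<lambda>m. g (m |` B))"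
    "integrable (measure_pmf (marg P \<mu>)) (\<lambda>m. f (m |` A) * g (m |` B))"
  with NA_D[OF na AB mo bdd]
  show "measure_pmf.expectation (marg P \<mu>) (\<lambda>m. f (m |` A) * g (m |` B))
     \<le> measure_pmf.expectation (marg P \<mu>) (\<lambda>m. f (m |` A))
        * measure_pmf.expectation (marg P \<mu>) (\<lambda>m. g (m |` B))"
    by (simp add: integral_marg PA)
qed

lemma nn_integral_mult_le_by_truncation:
  fixes F G :: "'a \<Rightarrow> real"
  assumes F: "\<And>x. 0 \<le> F x" and G: "\<And>x. 0 \<le> G x"
    and truncated: "\<And>n. measure_pmf.expectation \<mu> (\<lambda>x. min (F x) (real n) * min (G x) (real n))
       \<le> measure_pmf.expectation \<mu> (\<lambda>x. min (F x) (real n))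
          * measure_pmf.expectation \<mu> (\<lambda>x. min (G x) (real n))"
  shows "(\<integral>\<^sup>+ x. ennreal (F x * G x) \<partial>measure_pmf \<mu>)
     \<le> (\<integral>\<^sup>+ x. ennreal (F x) \<partial>measure_pmf \<mu>) * (\<integral>\<^sup>+ x. ennreal (G x) \<partial>measure_pmf \<mu>)"
proof -
  define h where "h n x = ennreal (min (F x) (real n) * min (G x) (real n))" for n x
  have bound: "integral\<^sup>N (measure_pmf \<mu>) (h n)
     \<le> (\<integral>\<^sup>+ x. ennreal (F x) \<partial>measure_pmf \<mu>) * (\<integral>\<^sup>+ x. ennreal (G x) \<partial>measure_pmf \<mu>)" for n
  proof -
    have "integral\<^sup>N (measure_pmf \<mu>) (h n)
       \<le> (\<integral>\<^sup>+ x. ennreal (min (F x) (real n)) \<partial>measure_pmf \<mu>)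
          * (\<integral>\<^sup>+ x. ennreal (min (G x) (real n)) \<partial>measure_pmf \<mu>)"
      unfolding h_def using truncated[of n] F G
      by (subst nn_integral_mult_le_iff_expectation[where c="real n"]) auto
    also have "\<dots> \<le> (\<integral>\<^sup>+ x. ennreal (F x) \<partial>measure_pmf \<mu>) * (\<integral>\<^sup>+ x. ennreal (G x) \<partial>measure_pmf \<mu>)"
      by (intro mult_mono nn_integral_mono ennreal_leI) auto
    finally show ?thesis .
  qed
  have SUP_h: "ennreal (F x * G x) = (SUP n. h n x)" for x
  proof (rule antisym)
    define N where "N = nat \<lceil>max (F x) (G x)\<rceil>"
    have "min (F x) (real N) = F x" "min (G x) (real N) = G x" unfolding N_def by linarith+
    then show "ennreal (F x * G x) \<le> (SUP n. h n x)"
      unfolding h_def by (intro SUP_upper2[where i=N]) auto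
    show "(SUP n. h n x) \<le> ennreal (F x * G x)"
      unfolding h_def using F G by (intro SUP_least ennreal_leI mult_mono) auto
  qed
  have "incseq h"
    unfolding incseq_def le_fun_def h_def using F G by (auto intro!: ennreal_leI mult_mono)
  then have "(\<integral>\<^sup>+ x. ennreal (F x * G x) \<partial>measure_pmf \<mu>) = (SUP n. integral\<^sup>N (measure_pmf \<mu>) (h n))"
    unfolding SUP_h by (simp add: nn_integral_monotone_convergence_SUP)
  also have "\<dots> \<le> (\<integral>\<^sup>+ x. ennreal (F x) \<partial>measure_pmf \<mu>) * (\<integral>\<^sup>+ x. ennreal (G x) \<partial>measure_pmf \<mu>)"
    by (intro SUP_least bound)
  finally show ?thesis .
qed

text \<open>NA only constrains bounded functions with finite expectations; truncation from above and
  monotone convergence remove both restrictions for nonnegative ones.\<close>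
lemma NA_nn_integral_mult_le:
  fixes f g :: "'a mem \<Rightarrow> real"
  assumes na: "NA Y \<mu>" and AB: "A \<subseteq> Y" "B \<subseteq> Y" "A \<inter> B = {}"
    and f: "\<And>m. 0 \<le> f m" and g: "\<And>m. 0 \<le> g m"
    and mo: "(mono_mem A f \<and> mono_mem B g) \<or> (antimono_mem A f \<and> antimono_mem B g)"
  shows "(\<integral>\<^sup>+ m. ennreal (f (m |` A) * g (m |` B)) \<partial>measure_pmf \<mu>)
     \<le> (\<integral>\<^sup>+ m. ennreal (f (m |` A)) \<partial>measure_pmf \<mu>) * (\<integral>\<^sup>+ m. ennreal (g (m |` B)) \<partial>measure_pmf \<mu>)"
proof (rule nn_integral_mult_le_by_truncation[OF f g])
  fix n
  have "mono (\<lambda>x::real. min x (real n))" by (simp add: monoI)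
  then have mo': "(mono_mem A (\<lambda>m. min (f m) (real n)) \<and> mono_mem B (\<lambda>m. min (g m) (real n))) \<or>
     (antimono_mem A (\<lambda>m. min (f m) (real n)) \<and> antimono_mem B (\<lambda>m. min (g m) (real n)))"
    using mo mono_mem_comp antimono_mem_comp by blast
  have "bdd_mem A (\<lambda>m. min (f m) (real n))" "bdd_mem B (\<lambda>m. min (g m) (real n))"
    unfolding bdd_mem_def by (intro disjI2 exI[of _ "real n"]; simp)+
  then show "measure_pmf.expectation \<mu> (\<lambda>m. min (f (m |` A)) (real n) * min (g (m |` B)) (real n))
     \<le> measure_pmf.expectation \<mu> (\<lambda>m. min (f (m |` A)) (real n))
        * measure_pmf.expectation \<mu> (\<lambda>m. min (g (m |` B)) (real n))"
    using f g
    by (intro NA_D[OF na AB mo'] integrable_pmf_bounded[where c="real n"]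
          integrable_pmf_bounded[where c="real n * real n"])
       (auto simp: abs_mult intro: mult_mono)
qed


section \<open>Negative association and the separating conjunction\<close>

lemma PNA_if_bigstar:
  assumes "\<forall>i<Suc n. y i \<notin> dom \<sigma>" "bigstar (\<lambda>i. atom (y i)) (Suc n) \<sigma> \<mu>"
  shows "PNA ((\<lambda>i. {y i}) ` {..<Suc n}) \<mu>"
  using assms
proof (induction n arbitrary: \<mu>)
  case 0
  then show ?case using PNA_singleton by (simp add: atom_def lessThan_Suc)
next
  case (Suc n)
  from Suc.prems(2) obtain \<mu>' \<mu>1 \<mu>2 where sub: "sub_dist \<mu>' \<mu>" and oplus: "in_oplus \<mu>' \<mu>1 \<mu>2"
     and star1: "bigstar (\<lambda>i. atom (y i)) (Suc n) \<sigma> \<mu>1" and star2: "atom (y (Suc n)) \<sigma> \<mu>2"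
    by (auto simp: star_def)
  have P1: "PNA ((\<lambda>i. {y i}) ` {..<Suc n}) \<mu>1" using Suc.IH[OF _ star1] Suc.prems(1) by auto
  have P2: "PNA {{y (Suc n)}} \<mu>2"
    using star2 Suc.prems(1) by (intro PNA_singleton) (auto simp: atom_def)
  have "PNA ((\<lambda>i. {y i}) ` {..<Suc n} \<union> {{y (Suc n)}}) \<mu>'"
    using oplus PNA_partition[OF P1] PNA_partition[OF P2] P1 P2 unfolding in_oplus_def by blast
  then have "PNA ((\<lambda>i. {y i}) ` {..<Suc (Suc n)}) \<mu>'"
    by (simp add: lessThan_Suc insert_commute)
  then show ?case using PNA_sub_dist sub by blast
qed

text \<open>The blocks of T other than the one containing y only see Z, where the partition
  negative association of the marginal applies.\<close>
lemma PNA_marg_other_blocks: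
  assumes P: "PNA S (marg Z \<mu>)" and co: "coarsens T (S \<union> {{y}})"
    and SZ: "\<Union>S \<subseteq> Z" and fin: "finite (\<Union>S)" and y: "y \<notin> \<Union>S" and B: "B \<in> T" "y \<in> B"
    and nn: "\<And>A m. 0 \<le> f A m"
    and mo: "(\<forall>A\<in>T. mono_mem A (f A)) \<or> (\<forall>A\<in>T. antimono_mem A (f A))"
  shows "(\<integral>\<^sup>+ m. ennreal (\<Prod>X\<in>T - {B}. f X (m |` X)) \<partial>measure_pmf \<mu>)
    \<le> (\<Prod>X\<in>T - {B}. \<integral>\<^sup>+ m. ennreal (f X (m |` X)) \<partial>measure_pmf \<mu>)"
proof -
  have part: "is_partition T" and UT: "\<Union>T = \<Union>S \<union> {y}" using co unfolding coarsens_def by auto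
  have "y \<notin> X" if "X \<in> T - {B}" for X
    using that part B unfolding is_partition_def by blast
  then have ZX: "Z \<inter> X = X" if "X \<in> T - {B}" for X
    using that UT SZ by blast
  let ?T' = "insert (B - {y}) (T - {B}) - {{}}"
  have co': "coarsens ?T' S" using coarsens_remove_point[OF co y B] .
  have "(\<Prod>X\<in>T - {B}. f X ((m |` Z) |` X)) = (\<Prod>X\<in>T - {B}. f X (m |` X))" for m
    by (rule prod.cong) (simp_all add: ZX)
  then have "(\<integral>\<^sup>+ m. ennreal (\<Prod>X\<in>T - {B}. f X (m |` X)) \<partial>measure_pmf \<mu>)
      = (\<integral>\<^sup>+ m. ennreal (\<Prod>X\<in>T - {B}. f X (m |` X)) \<partial>measure_pmf (marg Z \<mu>))"
    by (intro nn_integral_marg[symmetric]) simp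
  also have "\<dots> \<le> (\<Prod>X\<in>T - {B}. \<integral>\<^sup>+ m. ennreal (f X (m |` X)) \<partial>measure_pmf (marg Z \<mu>))"
  proof (rule PNA_subfamily[OF P co' _ _ nn])
    show "finite ?T'" using finite_coarsens[OF co' fin] .
    show "T - {B} \<subseteq> ?T'" using part unfolding is_partition_def by blast
  qed (use mo in blast)
  also have "\<dots> = (\<Prod>X\<in>T - {B}. \<integral>\<^sup>+ m. ennreal (f X (m |` X)) \<partial>measure_pmf \<mu>)"
    by (intro prod.cong nn_integral_marg) (simp_all add: ZX)
  finally show ?thesis .
qed

text \<open>The block B containing y is split off by negative association.\<close>
lemma PNA_insert_singleton:
  assumes na: "NA (insert y Z) \<mu>" and d: "is_dist (insert y Z) \<mu>" and yZ: "y \<notin> Z"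
    and P: "PNA S (marg Z \<mu>)"
  shows "PNA (S \<union> {{y}}) \<mu>"
proof -
  have SZ: "\<Union>S \<subseteq> Z" using PNA_partition(2)[OF P] pdom_marg[OF d] by auto
  have fin: "finite (\<Union>S)" using d SZ unfolding is_dist_def by (auto intro: finite_subset)
  show ?thesis
  proof (rule PNA_if_nonneg)
    show "wf_dist \<mu>" using wf_dist_if_is_dist[OF d] .
    show "is_partition (S \<union> {{y}})"
      using is_partition_insert_singleton[OF PNA_partition(1)[OF P]] SZ yZ by blast
    show "\<Union>(S \<union> {{y}}) \<subseteq> pdom \<mu>" using SZ pdom_eq[OF d] by auto
    fix T and f :: "'a set \<Rightarrow> 'a mem \<Rightarrow> real"
    assume co: "coarsens T (S \<union> {{y}})" and nn: "\<And>A m. 0 \<le> f A m"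
      and mo: "(\<forall>A\<in>T. mono_mem A (f A)) \<or> (\<forall>A\<in>T. antimono_mem A (f A))"
    have part: "is_partition T" and UT: "\<Union>T = \<Union>S \<union> {y}" using co unfolding coarsens_def by auto
    have finT: "finite T" using finite_coarsens[OF co] fin by simp
    obtain B where B: "B \<in> T" "y \<in> B" using UT by auto
    define C where "C = \<Union>(T - {B})"
    define g where "g m = (\<Prod>X\<in>T - {B}. f X (m |` X))" for m
    have BC: "B \<inter> C = {}" using part B(1) unfolding C_def is_partition_def by blast
    have sub: "B \<subseteq> insert y Z" "C \<subseteq> insert y Z" using UT SZ B(1) unfolding C_def by auto
    have "C \<inter> X = X" if "X \<in> T - {B}" for X
      using that unfolding C_def by blast
    then have gC: "g (m |` C) = g m" for m
      unfolding g_def by (intro prod.cong) auto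
    have split: "(\<Prod>A\<in>T. f A (m |` A)) = f B (m |` B) * g (m |` C)" for m
      unfolding gC unfolding g_def using prod.remove[OF finT B(1)] .
    have mo_BC: "mono_mem B (f B) \<and> mono_mem C g \<or> antimono_mem B (f B) \<and> antimono_mem C g"
      using mo B(1) unfolding C_def g_def by (auto intro!: mono_mem_prod antimono_mem_prod nn)
    have "(\<integral>\<^sup>+ m. ennreal (\<Prod>A\<in>T. f A (m |` A)) \<partial>measure_pmf \<mu>)
       \<le> (\<integral>\<^sup>+ m. ennreal (f B (m |` B)) \<partial>measure_pmf \<mu>) * (\<integral>\<^sup>+ m. ennreal (g (m |` C)) \<partial>measure_pmf \<mu>)"
      unfolding split
      by (rule NA_nn_integral_mult_le[OF na sub BC nn[of B] _ mo_BC]) (simp add: g_def nn prod_nonneg)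
    also have "\<dots> = (\<integral>\<^sup>+ m. ennreal (f B (m |` B)) \<partial>measure_pmf \<mu>) * (\<integral>\<^sup>+ m. ennreal (g m) \<partial>measure_pmf \<mu>)"
      by (simp only: gC)
    also have "\<dots> \<le> (\<integral>\<^sup>+ m. ennreal (f B (m |` B)) \<partial>measure_pmf \<mu>)
        * (\<Prod>X\<in>T - {B}. \<integral>\<^sup>+ m. ennreal (f X (m |` X)) \<partial>measure_pmf \<mu>)"
      unfolding g_def using SZ yZ
      by (intro mult_left_mono PNA_marg_other_blocks[OF P co SZ fin _ B nn mo]) auto
    also have "\<dots> = (\<Prod>A\<in>T. \<integral>\<^sup>+ m. ennreal (f A (m |` A)) \<partial>measure_pmf \<mu>)"
      using prod.remove[OF finT B(1), symmetric] .
    finally show "(\<integral>\<^sup>+ m. ennreal (\<Prod>A\<in>T. f A (m |` A)) \<partial>measure_pmf \<mu>)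
       \<le> (\<Prod>A\<in>T. \<integral>\<^sup>+ m. ennreal (f A (m |` A)) \<partial>measure_pmf \<mu>)" .
  qed
qed

lemma in_oplus_marg_insert:
  assumes na: "NA (insert y Z) \<mu>" and d: "is_dist (insert y Z) \<mu>" and yZ: "y \<notin> Z"
  shows "in_oplus \<mu> (marg Z \<mu>) (marg {y} \<mu>)"
  unfolding in_oplus_def
proof (intro conjI allI impI)
  have pdoms: "pdom (marg Z \<mu>) = Z" "pdom (marg {y} \<mu>) = {y}"
    using pdom_marg[OF d] by auto
  then show "pdom (marg Z \<mu>) \<inter> pdom (marg {y} \<mu>) = {}"
    and "is_dist (pdom (marg Z \<mu>) \<union> pdom (marg {y} \<mu>)) \<mu>"
    and "marg (pdom (marg Z \<mu>)) \<mu> = marg Z \<mu>" and "marg (pdom (marg {y} \<mu>)) \<mu> = marg {y} \<mu>"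
    using yZ d by auto
  fix S T
  assume T: "is_partition T" "\<Union>T \<subseteq> pdom (marg {y} \<mu>)" and PS: "PNA S (marg Z \<mu>)"
  then consider "T = {}" | "T = {{y}}" using partition_subset_singleton pdoms by metis
  then show "PNA (S \<union> T) \<mu>"
  proof cases
    case 1
    then show ?thesis using PNA_sub_dist[OF PS sub_dist_marg[OF d]] by auto
  next
    case 2
    then show ?thesis using PNA_insert_singleton[OF na d yZ PS] by simp
  qed
qed

lemma bigstar_if_NA:
  assumes "NA (y ` {..<Suc n}) \<mu>" "is_dist S \<mu>" "inj_on y {..<Suc n}"
  shows "bigstar (\<lambda>i. atom (y i)) (Suc n) \<sigma> \<mu>"
  using assms
proof (induction n arbitrary: \<mu> S)
  case 0
  then have "y 0 \<in> pdom \<mu>" unfolding NA_def by auto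
  then show ?case by (simp add: atom_def)
next
  case (Suc n)
  define Z where "Z = y ` {..<Suc n}"
  define Y where "Y = insert (y (Suc n)) Z"
  have Y: "y ` {..<Suc (Suc n)} = Y" unfolding Y_def Z_def by (simp add: lessThan_Suc)
  have yZ: "y (Suc n) \<notin> Z" using Suc.prems(3) unfolding Z_def by (auto dest: inj_onD)
  have YS: "Y \<subseteq> S" using Suc.prems(1,2) pdom_eq unfolding Y NA_def by blast
  define \<mu>' where "\<mu>' = marg Y \<mu>"
  have d': "is_dist Y \<mu>'" using is_dist_marg[OF Suc.prems(2)] YS unfolding \<mu>'_def by (metis Int_absorb1)
  have na': "NA Y \<mu>'" using NA_marg[OF Suc.prems(1)[unfolded Y] _ Suc.prems(2)] unfolding \<mu>'_def by simp
  have "bigstar (\<lambda>i. atom (y i)) (Suc n) \<sigma> (marg Z \<mu>')"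
  proof (rule Suc.IH)
    show "NA (y ` {..<Suc n}) (marg Z \<mu>')"
      using NA_marg[OF NA_subset[OF na'] _ d'] unfolding Y_def Z_def by blast
    show "is_dist (Y \<inter> Z) (marg Z \<mu>')" using is_dist_marg[OF d'] .
    show "inj_on y {..<Suc n}" using Suc.prems(3) by (rule inj_on_subset) auto
  qed
  moreover have "atom (y (Suc n)) \<sigma> (marg {y (Suc n)} \<mu>')"
    using pdom_marg[OF d'] unfolding atom_def Y_def by auto
  moreover have "in_oplus \<mu>' (marg Z \<mu>') (marg {y (Suc n)} \<mu>')"
    using in_oplus_marg_insert[OF na'[unfolded Y_def] d'[unfolded Y_def] yZ] .
  moreover have "sub_dist \<mu>' \<mu>" using sub_dist_marg[OF Suc.prems(2) YS] unfolding \<mu>'_def .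
  moreover have "wf_dist \<mu>'" "wf_dist (marg Z \<mu>')" "wf_dist (marg {y (Suc n)} \<mu>')"
    using d' is_dist_marg[OF d'] by (auto intro: wf_dist_if_is_dist)
  ultimately show ?case unfolding bigstar.simps star_def by blast
qed

theorem mainTheorem12:
  fixes DV RV :: "'v set" and S :: "'v set" and \<mu> :: "'v dist"
    and y :: "nat \<Rightarrow> 'v" and K :: nat
  assumes "DV \<inter> RV = {}" and "DV \<union> RV = UNIV"
    and "finite S" and "S \<subseteq> RV" and "is_dist S \<mu>"
    and "K \<ge> 1" and "inj_on y {..<K}" and "y ` {..<K} \<subseteq> RV"
  shows "NA (y ` {..<K}) \<mu> \<longleftrightarrow>
           (\<forall>\<sigma> :: 'v mem. finite (dom \<sigma>) \<longrightarrow> dom \<sigma> \<subseteq> DV \<longrightarrow>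
              bigstar (\<lambda>i. atom (y i)) K \<sigma> \<mu>)"
proof -
  obtain n where K: "K = Suc n" using assms(6) by (cases K) auto
  show ?thesis
  proof
    assume "NA (y ` {..<K}) \<mu>"
    then show "\<forall>\<sigma> :: 'v mem. finite (dom \<sigma>) \<longrightarrow> dom \<sigma> \<subseteq> DV \<longrightarrow> bigstar (\<lambda>i. atom (y i)) K \<sigma> \<mu>"
      using bigstar_if_NA[of y n \<mu> S] assms(5,7) K by auto
  next
    assume "\<forall>\<sigma> :: 'v mem. finite (dom \<sigma>) \<longrightarrow> dom \<sigma> \<subseteq> DV \<longrightarrow> bigstar (\<lambda>i. atom (y i)) K \<sigma> \<mu>"
    then have "bigstar (\<lambda>i. atom (y i)) (Suc n) Map.empty \<mu>" using K by auto
    then have "PNA ((\<lambda>i. {y i}) ` {..<Suc n}) \<mu>" by (intro PNA_if_bigstar) auto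
    then have "PNA ((\<lambda>x. {x}) ` (y ` {..<K})) \<mu>" using K by (simp add: image_image)
    then show "NA (y ` {..<K}) \<mu>" by (rule NA_if_PNA_singletons)
  qed
qed

end
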